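(* For every $n\geq 3$ and every prime power $q=p^h$, the minimum distance $d(C(PG(n,q))^\perp)$ equals $d(C(PG(2,q))^\perp)$.
   Context: $C(PG(m,q))$ is the $p$-ary code spanned over $\mathbb{F}_p$ by the incidence vectors of the hyperplanes of $PG(m,q)$, with coordinates indexed by points. For $m=2$ the hyperplanes are the lines. $C^\perp$ is the dual code with respect to the standard scalar product over $\mathbb{F}_p$. $d(\cdot)$ denotes minimum distance, i.e. minimum nonzero weight. *)

theory Defs
  imports Main
begin

text \<open>Vectors of GF(q)^(m+1), represented as functions nat => 'a vanishing outside {0..m}.\<close>
definition vecs :: "nat \<Rightarrow> (nat \<Rightarrow> 'a::field) set" where
  "vecs m = {v. \<forall>i>m. v i = 0}"

definition line_of :: "(nat \<Rightarrow> 'a::field) \<Rightarrow> (nat \<Rightarrow> 'a) set" where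
  "line_of v = {(\<lambda>i. c * v i) | c. True}"

definition pg_points :: "nat \<Rightarrow> (nat \<Rightarrow> 'a::field) set set" where
  "pg_points m = {line_of v | v. v \<in> vecs m \<and> v \<noteq> (\<lambda>_. 0)}"

definition pg_hyperplane :: "nat \<Rightarrow> (nat \<Rightarrow> 'a::field) \<Rightarrow> (nat \<Rightarrow> 'a) set set" where
  "pg_hyperplane m a = {P \<in> pg_points m. \<forall>v\<in>P. (\<Sum>i\<le>m. a i * v i) = 0}"

definition pg_hyperplanes :: "nat \<Rightarrow> (nat \<Rightarrow> 'a::field) set set set" where
  "pg_hyperplanes m = {pg_hyperplane m a | a. a \<in> vecs m \<and> a \<noteq> (\<lambda>_. 0)}"

text \<open>Incidence vector of a set of points, with entries in the field 'b (playing F_p).\<close>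
definition incidence_vec :: "'p set \<Rightarrow> 'p \<Rightarrow> 'b::field" where
  "incidence_vec S = (\<lambda>x. if x \<in> S then 1 else 0)"

text \<open>C(PG(m,q)): the 'b-span of the incidence vectors of the hyperplanes
  (finite linear combinations; the set of hyperplanes is finite for finite 'a).\<close>
definition pg_code :: "nat \<Rightarrow> ((nat \<Rightarrow> 'a::{finite,field}) set \<Rightarrow> 'b::field) set" where
  "pg_code m = {(\<lambda>x. \<Sum>H\<in>pg_hyperplanes m. coef H * incidence_vec H x) | coef. True}"

definition pg_dual_code :: "nat \<Rightarrow> ((nat \<Rightarrow> 'a::{finite,field}) set \<Rightarrow> 'b::field) set" where
  "pg_dual_code m = {c. (\<forall>x. x \<notin> pg_points m \<longrightarrow> c x = 0) \<and>
      (\<forall>w\<in>(pg_code m :: ((nat \<Rightarrow> 'a) set \<Rightarrow> 'b) set). (\<Sum>x\<in>pg_points m. w x * c x) = 0)}"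

definition weight :: "'p set \<Rightarrow> ('p \<Rightarrow> 'b::zero) \<Rightarrow> nat" where
  "weight P c = card {x \<in> P. c x \<noteq> 0}"

definition dual_min_dist :: "'a::{finite,field} itself \<Rightarrow> 'b::field itself \<Rightarrow> nat \<Rightarrow> nat" where
  "dual_min_dist TA TB m =
     Min {weight (pg_points m) c | c. c \<in> (pg_dual_code m :: ((nat \<Rightarrow> 'a) set \<Rightarrow> 'b) set) \<and>
                                        c \<noteq> (\<lambda>_. 0)}"

end

theory Submission
  imports Defs "HOL-Number_Theory.Residues"
begin

(* Let q = |'a|; the only property of the coefficient field 'b that is used is q = 0 in 'b.
   A vector c on the points lies in the dual code iff it vanishes off the points and its
   sum over every hyperplane is zero (pg_dual_code_iff).

   Every dual codeword has total sum zero (sum_pg_points_dual), and every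
   hyperplane of PG(n,q) meets PG(m,q) in all of it or in a hyperplane; hence dual codewords
   of PG(2,q) are dual codewords of PG(n,q) of the same weight (pg_dual_code_embed).

   PG(2,q) has a dual codeword of weight <= 2q (plane_small_codeword), so a
   minimum weight dual codeword of PG(n,q) has weight <= 2q.  Such a codeword of PG(m,q),
   m >= 3, is projected from a point on no line joining two of its support points (which
   exists by counting) to a nonzero dual codeword of PG(m-1,q) of no larger weight
   (dual_codeword_projection); iterating reaches the plane (dual_codeword_descent). *)

lemma finite_vecs: "finite (vecs m :: (nat \<Rightarrow> 'a::{finite,field}) set)"
proof -
  have "vecs m = {f::nat \<Rightarrow> 'a. \<forall>x. (x \<in> {..m} \<longrightarrow> f x \<in> UNIV) \<and> (x \<notin> {..m} \<longrightarrow> f x = 0)}"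
    by (auto simp: vecs_def)
  thus ?thesis using finite_set_of_finite_funs[of "{..m}" "UNIV::'a set" 0] by simp
qed

lemma finite_pg_points: "finite (pg_points m :: (nat \<Rightarrow> 'a::{finite,field}) set set)"
proof -
  have "pg_points m \<subseteq> line_of ` (vecs m :: (nat \<Rightarrow> 'a) set)"
    by (auto simp: pg_points_def)
  thus ?thesis using finite_vecs finite_subset by blast
qed

lemma finite_pg_hyperplanes: "finite (pg_hyperplanes m :: (nat \<Rightarrow> 'a::{finite,field}) set set set)"
proof -
  have "pg_hyperplanes m \<subseteq> pg_hyperplane m ` (vecs m :: (nat \<Rightarrow> 'a) set)"
    by (auto simp: pg_hyperplanes_def)
  thus ?thesis using finite_vecs finite_subset by blast
qed

lemma pg_hyperplane_subset: "pg_hyperplane m a \<subseteq> pg_points m"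
  by (auto simp: pg_hyperplane_def)

lemma finite_pg_hyperplane: "finite (pg_hyperplane m a :: (nat \<Rightarrow> 'a::{finite,field}) set set)"
  using finite_subset[OF pg_hyperplane_subset finite_pg_points] .

lemma in_line_of: "w \<in> line_of v \<longleftrightarrow> (\<exists>c. w = (\<lambda>i. c * v i))"
  by (auto simp: line_of_def)

lemma self_in_line_of: "v \<in> line_of v"
  unfolding in_line_of by (rule exI[of _ 1]) simp

lemma line_of_smult: "(c::'a::field) \<noteq> 0 \<Longrightarrow> line_of (\<lambda>i. c * v i) = line_of v"
proof (auto simp: in_line_of)
  fix d
  show "\<exists>e. (\<lambda>i. d * (c * v i)) = (\<lambda>i. e * v i)"
    by (rule exI[of _ "d * c"]) (simp add: mult.assoc)
next
  fix d assume "c \<noteq> 0"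
  then show "\<exists>e. (\<lambda>i. d * v i) = (\<lambda>i. e * (c * v i))"
    by (intro exI[of _ "d / c"]) (simp add: fun_eq_iff)
qed

lemma line_of_eq_imp_multiple: "line_of v = line_of w \<Longrightarrow> \<exists>c. v = (\<lambda>i. c * w i)"
  using self_in_line_of[of v] by (simp add: in_line_of)

lemma pg_points_iff:
  "P \<in> pg_points m \<longleftrightarrow> (\<exists>v. v \<in> vecs m \<and> v \<noteq> (\<lambda>_. 0) \<and> P = line_of v)"
  by (auto simp: pg_points_def)

lemma line_of_in_pg_hyperplane:
  assumes "u \<in> vecs m" "u \<noteq> (\<lambda>_. 0)"
  shows "line_of u \<in> pg_hyperplane m a \<longleftrightarrow> (\<Sum>i\<le>m. a i * u i) = 0"
proof -
  have "(\<Sum>i\<le>m. a i * (c * u i)) = c * (\<Sum>i\<le>m. a i * u i)" for c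
    by (simp add: sum_distrib_left algebra_simps)
  thus ?thesis using assms self_in_line_of[of u]
    by (auto simp: pg_hyperplane_def pg_points_iff in_line_of)
qed

lemma sum_incidence_vec:
  assumes "finite A" "H \<subseteq> A"
  shows "(\<Sum>x\<in>A. incidence_vec H x * c x) = (\<Sum>x\<in>H. c x)"
  using assms by (simp add: incidence_vec_def if_distrib[of "\<lambda>t. t * _"] sum.If_cases Int_absorb1)

lemma incidence_vec_in_pg_code:
  assumes H: "H \<in> pg_hyperplanes m"
  shows "(incidence_vec H :: _ \<Rightarrow> 'b::field) \<in> (pg_code m :: ((nat \<Rightarrow> 'a::{finite,field}) set \<Rightarrow> 'b) set)"
proof -
  let ?coef = "\<lambda>H'. if H' = H then (1::'b) else 0"
  have "incidence_vec H = (\<lambda>x. \<Sum>H'\<in>pg_hyperplanes m. ?coef H' * incidence_vec H' x)"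
    using H by (simp add: if_distrib[of "\<lambda>t. t * _"] finite_pg_hyperplanes cong: if_cong)
  then show ?thesis unfolding pg_code_def by (intro CollectI exI[of _ ?coef]) simp
qed

lemma pg_dual_code_iff:
  "(c \<in> (pg_dual_code m :: ((nat \<Rightarrow> 'a::{finite,field}) set \<Rightarrow> 'b::field) set)) \<longleftrightarrow>
   (\<forall>x. x \<notin> pg_points m \<longrightarrow> c x = 0) \<and>
   (\<forall>a. a \<in> vecs m \<and> a \<noteq> (\<lambda>_. 0) \<longrightarrow> (\<Sum>x\<in>pg_hyperplane m a. c x) = 0)"
  (is "_ \<longleftrightarrow> ?supp \<and> ?sums")
proof -
  have incidence_sum: "(\<Sum>x\<in>pg_points m. incidence_vec H x * c x) = (\<Sum>x\<in>H. c x)"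
    if "H \<in> pg_hyperplanes m" for H
    using that pg_hyperplane_subset finite_pg_points
    by (auto simp: pg_hyperplanes_def intro!: sum_incidence_vec)
  have "(\<forall>w\<in>pg_code m. (\<Sum>x\<in>pg_points m. w x * c x) = 0) \<longleftrightarrow> ?sums"
  proof
    assume "\<forall>w\<in>pg_code m. (\<Sum>x\<in>pg_points m. w x * c x) = 0"
    then show ?sums
      using incidence_vec_in_pg_code incidence_sum by (fastforce simp: pg_hyperplanes_def)
  next
    assume sums: ?sums
    show "\<forall>w\<in>pg_code m. (\<Sum>x\<in>pg_points m. w x * c x) = 0"
    proof
      fix w assume "w \<in> (pg_code m :: ((nat \<Rightarrow> 'a) set \<Rightarrow> 'b) set)"
      then obtain coef where w: "w = (\<lambda>x. \<Sum>H\<in>pg_hyperplanes m. coef H * incidence_vec H x)"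
        by (auto simp: pg_code_def)
      have "(\<Sum>x\<in>pg_points m. w x * c x)
          = (\<Sum>H\<in>pg_hyperplanes m. coef H * (\<Sum>x\<in>pg_points m. incidence_vec H x * c x))"
        unfolding w by (simp add: sum_distrib_right sum_distrib_left mult.assoc sum.swap[of _ "pg_points m"])
      also have "\<dots> = 0"
        using sums incidence_sum by (auto simp: pg_hyperplanes_def intro!: sum.neutral)
      finally show "(\<Sum>x\<in>pg_points m. w x * c x) = 0" .
    qed
  qed
  then show ?thesis by (simp add: pg_dual_code_def)
qed

(* The hypothesis |'b| = char 'a is only used through q = 0 in 'b: both characteristics
   divide the respective field orders. *)
lemma card_field_eq_0_in_char:
  assumes "card (UNIV :: 'b::{finite,field} set) = semiring_char TYPE('a::{finite,field})"
  shows "(of_nat (card (UNIV::'a set)) :: 'b) = 0"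
proof -
  have "CHAR('b) dvd card (UNIV::'b set)" by (rule CHAR_dvd_CARD)
  also have "\<dots> = CHAR('a)" using assms by simp
  also have "\<dots> dvd card (UNIV::'a set)" by (rule CHAR_dvd_CARD)
  finally show ?thesis by (simp add: of_nat_eq_0_iff_char_dvd)
qed

lemma sum_over_family:
  assumes "finite A" "finite I" "\<And>i. i \<in> I \<Longrightarrow> H i \<subseteq> A"
  shows "(\<Sum>i\<in>I. \<Sum>x\<in>H i. c x) = (\<Sum>x\<in>A. of_nat (card {i\<in>I. x \<in> H i}) * (c x :: 'b::semiring_1))"
proof -
  have "(\<Sum>i\<in>I. \<Sum>x\<in>H i. c x) = (\<Sum>i\<in>I. \<Sum>x\<in>A. if x \<in> H i then c x else 0)"
    using assms by (intro sum.cong[OF refl]) (simp add: sum.inter_restrict[symmetric] Int_absorb1)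
  also have "\<dots> = (\<Sum>x\<in>A. \<Sum>i\<in>I. if x \<in> H i then c x else 0)"
    by (rule sum.swap)
  also have "\<dots> = (\<Sum>x\<in>A. of_nat (card {i\<in>I. x \<in> H i}) * c x)"
    using assms(2) by (simp add: sum.If_cases Int_def conj_commute)
  finally show ?thesis .
qed

definition coord2 :: "'a::zero \<Rightarrow> 'a \<Rightarrow> nat \<Rightarrow> 'a" where
  "coord2 s t = (\<lambda>i. if i = 0 then s else if i = 1 then t else 0)"

lemma coord2_vecs: "m \<ge> 1 \<Longrightarrow> coord2 s t \<in> vecs m"
  by (simp add: coord2_def vecs_def)

lemma coord2_nonzero: "s \<noteq> 0 \<or> t \<noteq> 0 \<Longrightarrow> coord2 s t \<noteq> (\<lambda>_. 0)"
  by (auto simp: coord2_def fun_eq_iff)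

lemma sum_coord2:
  assumes "m \<ge> 1"
  shows "(\<Sum>i\<le>m. coord2 s t i * u i) = s * u 0 + t * (u 1 :: 'a::comm_semiring_1)"
proof -
  have "(\<Sum>i\<le>m. coord2 s t i * u i) = (\<Sum>i\<in>{0,1}. coord2 s t i * u i)"
    using assms by (intro sum.mono_neutral_right) (auto simp: coord2_def)
  then show ?thesis by (simp add: coord2_def)
qed

(* Modulo q, the equation d t + b = 0 has one root if d is nonzero and
   none or q (= 0) roots otherwise. *)
lemma card_affine_roots:
  assumes q: "(of_nat (card (UNIV::'a::{finite,field} set)) :: 'b::field) = 0"
  shows "of_nat (card {t::'a. d * t + b = 0}) = (if d = 0 then 0 else (1::'b))"
proof (cases "d = 0")
  case False
  then have "{t. d * t + b = 0} = {- b / d}"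
    by (auto simp: field_simps eq_neg_iff_add_eq_0)
  then show ?thesis using False by simp
next
  case True
  then show ?thesis using q by (cases "b = 0") simp_all
qed

(* A dual codeword has total sum zero: summing it over the q+1 hyperplanes of the pencil
   s X0 + t X1 = 0 counts every point once or q+1 times, i.e. once modulo q. *)
lemma sum_pg_points_dual:
  fixes c :: "(nat \<Rightarrow> 'a::{finite,field}) set \<Rightarrow> 'b::field"
  assumes c: "c \<in> pg_dual_code m" and m: "m \<ge> 1"
    and q: "(of_nat (card (UNIV::'a set)) :: 'b) = 0"
  shows "(\<Sum>x\<in>pg_points m. c x) = 0"
proof -
  define l where "l t = pg_hyperplane m (coord2 t (1::'a))" for t
  define l_inf where "l_inf = pg_hyperplane m (coord2 (1::'a) 0)"
  have count: "of_nat (card {t\<in>UNIV. x \<in> l t}) + incidence_vec l_inf x = (1::'b)"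
    if x: "x \<in> pg_points m" for x
  proof -
    obtain u where u: "u \<in> vecs m" "u \<noteq> (\<lambda>_. 0)" "x = line_of u"
      using x by (auto simp: pg_points_iff)
    have "x \<in> l t \<longleftrightarrow> u 0 * t + u 1 = 0" for t
      unfolding l_def u(3) line_of_in_pg_hyperplane[OF u(1,2)] sum_coord2[OF m] by (simp add: mult.commute)
    moreover have "x \<in> l_inf \<longleftrightarrow> u 0 = 0"
      unfolding l_inf_def u(3) line_of_in_pg_hyperplane[OF u(1,2)] sum_coord2[OF m] by simp
    ultimately show ?thesis using card_affine_roots[OF q, of "u 0" "u 1"] by (simp add: incidence_vec_def)
  qed
  have pencil: "(\<Sum>t\<in>UNIV. \<Sum>x\<in>l t. c x) = (\<Sum>x\<in>pg_points m. of_nat (card {t\<in>UNIV. x \<in> l t}) * c x)"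
    by (rule sum_over_family) (simp_all add: finite_pg_points l_def pg_hyperplane_subset)
  have line_inf: "(\<Sum>x\<in>l_inf. c x) = (\<Sum>x\<in>pg_points m. incidence_vec l_inf x * c x)"
    by (rule sum_incidence_vec[symmetric]) (simp_all add: finite_pg_points l_inf_def pg_hyperplane_subset)
  have "0 = (\<Sum>t\<in>UNIV. \<Sum>x\<in>l t. c x) + (\<Sum>x\<in>l_inf. c x)"
    using c m unfolding pg_dual_code_iff l_def l_inf_def by (simp add: coord2_vecs coord2_nonzero)
  also have "\<dots> = (\<Sum>x\<in>pg_points m. (of_nat (card {t\<in>UNIV. x \<in> l t}) + incidence_vec l_inf x) * c x)"
    unfolding pencil line_inf by (simp add: sum.distrib distrib_right)
  also have "\<dots> = (\<Sum>x\<in>pg_points m. c x)"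
    using count by (intro sum.cong refl) (metis mult_1)
  finally show ?thesis by simp
qed

lemma vecs_mono: "m \<le> n \<Longrightarrow> vecs m \<subseteq> vecs n"
  by (auto simp: vecs_def)

lemma pg_points_mono: "m \<le> n \<Longrightarrow> pg_points m \<subseteq> pg_points n"
  unfolding pg_points_def using vecs_mono by blast

lemma pg_hyperplane_restrict:
  fixes a :: "nat \<Rightarrow> 'a::field"
  assumes "m \<le> n"
  defines "a\<^sub>m \<equiv> (\<lambda>i. if i \<le> m then a i else 0)"
  shows "pg_hyperplane n a \<inter> pg_points m = (if a\<^sub>m = (\<lambda>_. 0) then pg_points m else pg_hyperplane m a\<^sub>m)"
proof -
  have "x \<in> pg_hyperplane n a \<longleftrightarrow> x \<in> pg_hyperplane m a\<^sub>m" if x: "x \<in> pg_points m" for x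
  proof -
    obtain u where u: "u \<in> vecs m" "u \<noteq> (\<lambda>_. 0)" "x = line_of u"
      using x by (auto simp: pg_points_iff)
    have un: "u \<in> vecs n" using u(1) vecs_mono[OF assms(1)] by blast
    have "(\<Sum>i\<le>n. a i * u i) = (\<Sum>i\<le>m. a i * u i)"
      using u(1) assms(1) by (intro sum.mono_neutral_right) (auto simp: vecs_def)
    also have "\<dots> = (\<Sum>i\<le>m. a\<^sub>m i * u i)" by (simp add: a\<^sub>m_def)
    finally show ?thesis
      unfolding u(3) line_of_in_pg_hyperplane[OF un u(2)] line_of_in_pg_hyperplane[OF u(1,2)] by simp
  qed
  moreover have "pg_hyperplane m (\<lambda>_. 0) = pg_points m"
    by (auto simp: pg_hyperplane_def)
  ultimately show ?thesis using pg_hyperplane_subset[of m a\<^sub>m] by auto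
qed

lemma pg_dual_code_embed:
  fixes c :: "(nat \<Rightarrow> 'a::{finite,field}) set \<Rightarrow> 'b::field"
  assumes c: "c \<in> pg_dual_code m" and m: "1 \<le> m" "m \<le> n"
    and q: "(of_nat (card (UNIV::'a set)) :: 'b) = 0"
  shows "c \<in> pg_dual_code n" "weight (pg_points n) c = weight (pg_points m) c"
proof -
  have supp: "\<And>x. x \<notin> pg_points m \<Longrightarrow> c x = 0" using c by (simp add: pg_dual_code_iff)
  have sub: "pg_points m \<subseteq> pg_points n" using pg_points_mono[OF m(2)] .
  show "weight (pg_points n) c = weight (pg_points m) c"
    unfolding weight_def using sub supp by (metis (mono_tags, lifting) Collect_cong subsetD)
  have "(\<Sum>x\<in>pg_hyperplane n a. c x) = 0" if a: "a \<in> vecs n" "a \<noteq> (\<lambda>_. 0)" for a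
  proof -
    define a\<^sub>m where "a\<^sub>m = (\<lambda>i. if i \<le> m then a i else 0)"
    have "(\<Sum>x\<in>pg_hyperplane n a. c x) = (\<Sum>x\<in>pg_hyperplane n a \<inter> pg_points m. c x)"
      using supp by (intro sum.mono_neutral_right) (auto simp: finite_pg_hyperplane)
    also have "\<dots> = (\<Sum>x\<in>(if a\<^sub>m = (\<lambda>_. 0) then pg_points m else pg_hyperplane m a\<^sub>m). c x)"
      unfolding a\<^sub>m_def pg_hyperplane_restrict[OF m(2)] ..
    also have "\<dots> = 0"
      using sum_pg_points_dual[OF c m(1) q] c by (simp add: pg_dual_code_iff a\<^sub>m_def vecs_def)
    finally show ?thesis .
  qed
  then show "c \<in> pg_dual_code n"
    using sub supp by (auto simp: pg_dual_code_iff)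
qed

definition vec3 :: "'a::zero \<Rightarrow> 'a \<Rightarrow> 'a \<Rightarrow> nat \<Rightarrow> 'a" where
  "vec3 x y z = (\<lambda>i. if i = 0 then x else if i = 1 then y else if i = 2 then z else 0)"

lemma vec3_vecs: "vec3 x y z \<in> vecs 2"
  by (simp add: vec3_def vecs_def)

lemma vec3_nonzero: "x \<noteq> 0 \<or> y \<noteq> 0 \<Longrightarrow> vec3 x y z \<noteq> (\<lambda>_. 0)"
  by (metis vec3_def one_neq_zero)

lemma sum_vec3: "(\<Sum>i\<le>2. a i * vec3 x y z i) = a 0 * x + a 1 * y + a 2 * (z :: 'a::comm_semiring_1)"
  by (simp add: vec3_def numeral_2_eq_2 add.assoc)

lemma line_of_vec3_in_pg_points: "x \<noteq> 0 \<or> y \<noteq> 0 \<Longrightarrow> line_of (vec3 x y z) \<in> pg_points 2"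
  unfolding pg_points_iff using vec3_vecs vec3_nonzero by blast

lemma line_of_vec3_in_pg_hyperplane:
  "x \<noteq> 0 \<or> y \<noteq> 0 \<Longrightarrow> line_of (vec3 x y z) \<in> pg_hyperplane 2 a \<longleftrightarrow> a 0 * x + a 1 * y + a 2 * z = 0"
  by (simp add: line_of_in_pg_hyperplane[OF vec3_vecs vec3_nonzero] sum_vec3)

(* The points (x:y:t), t in GF(q), for fixed nonzero (x,y): the line through (x:y:0) and
   (0:0:1) with the point (0:0:1) removed. *)
definition affine_part :: "'a::field \<Rightarrow> 'a \<Rightarrow> (nat \<Rightarrow> 'a) set set" where
  "affine_part x y = range (\<lambda>t. line_of (vec3 x y t))"

lemma affine_part_subset: "x \<noteq> 0 \<or> y \<noteq> 0 \<Longrightarrow> affine_part x y \<subseteq> pg_points 2"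
  by (auto simp: affine_part_def line_of_vec3_in_pg_points)

lemma inj_affine_part:
  fixes x y :: "'a::field"
  assumes "x \<noteq> 0 \<or> y \<noteq> 0"
  shows "inj (\<lambda>t. line_of (vec3 x y t))"
proof (rule injI)
  fix s t assume "line_of (vec3 x y s) = line_of (vec3 x y t)"
  then obtain k where k: "vec3 x y s = (\<lambda>i. k * vec3 x y t i)"
    using line_of_eq_imp_multiple by blast
  have "k = 1"
    using assms fun_cong[OF k, of 0] fun_cong[OF k, of 1] by (auto simp: vec3_def)
  then show "s = t" using fun_cong[OF k, of 2] by (simp add: vec3_def)
qed

lemma card_affine_part:
  "x \<noteq> 0 \<or> y \<noteq> 0 \<Longrightarrow> card (affine_part x y :: (nat \<Rightarrow> 'a::{finite,field}) set set) = card (UNIV::'a set)"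
  unfolding affine_part_def by (simp add: inj_affine_part card_image)

(* Modulo q, a line a0 X0 + a1 X1 + a2 X2 = 0 meets an affine part in one point if it does
   not pass through (0:0:1), and in none or all q points otherwise. *)
lemma pg_hyperplane_meets_affine_part:
  fixes a :: "nat \<Rightarrow> 'a::{finite,field}"
  assumes q: "(of_nat (card (UNIV::'a set)) :: 'b::field) = 0" and xy: "x \<noteq> 0 \<or> y \<noteq> 0"
  shows "of_nat (card (pg_hyperplane 2 a \<inter> affine_part x y)) = (if a 2 = 0 then 0 else (1::'b))"
proof -
  have "pg_hyperplane 2 a \<inter> affine_part x y
      = (\<lambda>t. line_of (vec3 x y t)) ` {t. a 2 * t + (a 0 * x + a 1 * y) = 0}"
    using xy by (auto simp: affine_part_def line_of_vec3_in_pg_hyperplane add.commute)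
  then show ?thesis
    using inj_affine_part[OF xy] by (simp add: card_image inj_on_subset card_affine_roots[OF q])
qed

lemma sum_incidence_vec_eq_card:
  "finite H \<Longrightarrow> (\<Sum>x\<in>H. incidence_vec S x) = (of_nat (card (H \<inter> S)) :: 'b::field)"
  by (simp add: incidence_vec_def sum.If_cases Int_def)

(* PG(2,q) has a dual codeword of weight at most 2q: the difference of the incidence vectors
   of the two disjoint affine parts {(0:1:t)} and {(1:0:t)}, which every line meets in the
   same number of points modulo q. *)
lemma plane_small_codeword:
  assumes q: "(of_nat (card (UNIV::'a::{finite,field} set)) :: 'b::field) = 0"
  shows "\<exists>c :: (nat \<Rightarrow> 'a) set \<Rightarrow> 'b. c \<in> pg_dual_code 2 \<and> c \<noteq> (\<lambda>_. 0) \<and>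
            weight (pg_points 2) c \<le> 2 * card (UNIV::'a set)"
proof -
  define A where "A = affine_part 0 (1::'a)"
  define B where "B = affine_part 1 (0::'a)"
  define c :: "(nat \<Rightarrow> 'a) set \<Rightarrow> 'b" where "c = (\<lambda>x. incidence_vec A x - incidence_vec B x)"
  have "line_of (vec3 0 (1::'a) s) \<noteq> line_of (vec3 1 0 t)" for s t
  proof
    assume "line_of (vec3 0 (1::'a) s) = line_of (vec3 1 0 t)"
    then obtain k where k: "vec3 0 (1::'a) s = (\<lambda>i. k * vec3 1 0 t i)"
      using line_of_eq_imp_multiple by blast
    from fun_cong[OF k, of 1] show False by (simp add: vec3_def)
  qed
  then have AB: "A \<inter> B = {}" by (auto simp: A_def B_def affine_part_def)
  have "c \<in> pg_dual_code 2"
    unfolding pg_dual_code_iff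
  proof (intro conjI allI impI)
    show "x \<notin> pg_points 2 \<Longrightarrow> c x = 0" for x
      using affine_part_subset[of 0 "1::'a"] affine_part_subset[of 1 "0::'a"]
      by (auto simp: A_def B_def c_def incidence_vec_def)
    fix a :: "nat \<Rightarrow> 'a"
    show "(\<Sum>x\<in>pg_hyperplane 2 a. c x) = 0"
      by (simp add: c_def sum_subtractf sum_incidence_vec_eq_card finite_pg_hyperplane
          A_def B_def pg_hyperplane_meets_affine_part[OF q])
  qed
  moreover have "c \<noteq> (\<lambda>_. 0)"
  proof
    assume "c = (\<lambda>_. 0)"
    moreover have "line_of (vec3 0 1 0) \<in> A - B" using AB by (auto simp: A_def affine_part_def)
    ultimately show False by (metis DiffE c_def incidence_vec_def diff_0_right one_neq_zero)
  qed
  moreover have "weight (pg_points 2) c \<le> 2 * card (UNIV::'a set)"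
  proof -
    have "weight (pg_points 2) c \<le> card (A \<union> B)"
      unfolding weight_def by (rule card_mono) (auto simp: A_def B_def c_def incidence_vec_def affine_part_def)
    also have "\<dots> \<le> card A + card B" by (rule card_Un_le)
    also have "\<dots> = 2 * card (UNIV::'a set)" by (simp add: A_def B_def card_affine_part)
    finally show ?thesis .
  qed
  ultimately show ?thesis by blast
qed

(* Projection from the point P = line_of p onto a hyperplane: p j is nonzero, the j-th
   coordinate is eliminated and the remaining m coordinates are renumbered by skip j. *)
definition skip :: "nat \<Rightarrow> nat \<Rightarrow> nat" where
  "skip j i = (if i < j then i else Suc i)"

definition proj :: "nat \<Rightarrow> nat \<Rightarrow> (nat \<Rightarrow> 'a::field) \<Rightarrow> (nat \<Rightarrow> 'a) \<Rightarrow> nat \<Rightarrow> 'a" where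
  "proj m j p v = (\<lambda>i. if i < m then v (skip j i) - v j / p j * p (skip j i) else 0)"

lemma inj_skip: "inj (skip j)"
  by (auto simp: inj_def skip_def split: if_splits)

lemma skip_image: "j \<le> m \<Longrightarrow> skip j ` {..<m} = {..m} - {j}"
proof
  assume j: "j \<le> m"
  show "skip j ` {..<m} \<subseteq> {..m} - {j}" using j by (auto simp: skip_def)
  show "{..m} - {j} \<subseteq> skip j ` {..<m}"
  proof
    fix x assume x: "x \<in> {..m} - {j}"
    show "x \<in> skip j ` {..<m}"
    proof (cases "x < j")
      case True
      then show ?thesis using j by (intro rev_image_eqI[of x]) (auto simp: skip_def)
    next
      case False
      then show ?thesis using x by (intro rev_image_eqI[of "x - 1"]) (auto simp: skip_def)
    qed
  qed
qed

lemma proj_vecs: "proj m j p v \<in> vecs (m - 1)"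
  unfolding proj_def vecs_def by auto

lemma proj_diff: "proj m j p (\<lambda>i. v i - k * w i) = (\<lambda>i. proj m j p v i - k * proj m j p w i)"
  by (auto simp: proj_def fun_eq_iff algebra_simps diff_divide_distrib)

lemma proj_image_line_of: "proj m j p ` line_of v = line_of (proj m j p v)"
proof -
  have smult: "proj m j p (\<lambda>i. k * v i) = (\<lambda>i. k * proj m j p v i)" for k
    by (auto simp: proj_def fun_eq_iff algebra_simps)
  show ?thesis
  proof
    show "proj m j p ` line_of v \<subseteq> line_of (proj m j p v)"
      by (auto simp: line_of_def smult)
    show "line_of (proj m j p v) \<subseteq> proj m j p ` line_of v"
    proof
      fix w assume "w \<in> line_of (proj m j p v)"
      then obtain k where "w = proj m j p (\<lambda>i. k * v i)" by (auto simp: line_of_def smult)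
      moreover have "(\<lambda>i. k * v i) \<in> line_of v" by (auto simp: line_of_def)
      ultimately show "w \<in> proj m j p ` line_of v" by blast
    qed
  qed
qed

lemma proj_eq_zero:
  assumes "v \<in> vecs m" "p \<in> vecs m" "j \<le> m" "p j \<noteq> 0" "proj m j p v = (\<lambda>_. 0)"
  shows "v = (\<lambda>i. (v j / p j) * p i)"
proof
  fix i
  show "v i = v j / p j * p i"
  proof (cases "i = j")
    case True
    then show ?thesis using assms(4) by simp
  next
    case False
    show ?thesis
    proof (cases "i \<le> m")
      case True
      define k where "k = (if i < j then i else i - 1)"
      have k: "k < m" "skip j k = i" using True False assms(3) by (auto simp: k_def skip_def)
      from fun_cong[OF assms(5), of k] k show ?thesis by (simp add: proj_def)
    next
      case False
      then show ?thesis using assms(1,2) by (simp add: vecs_def)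
    qed
  qed
qed

lemma proj_nonzero:
  assumes v: "v \<in> vecs m" "v \<noteq> (\<lambda>_. 0)" "line_of v \<noteq> line_of p"
    and p: "p \<in> vecs m" "j \<le> m" "p j \<noteq> 0"
  shows "proj m j p v \<noteq> (\<lambda>_. 0)"
proof
  assume "proj m j p v = (\<lambda>_. 0)"
  then have v_eq: "v = (\<lambda>i. (v j / p j) * p i)" using proj_eq_zero v(1) p by blast
  then have "v j / p j \<noteq> 0" using v(2) by auto
  then have "line_of v = line_of p" by (subst v_eq) (rule line_of_smult)
  with v(3) show False ..
qed

lemma proj_pg_point:
  assumes x: "x \<in> pg_points m" "x \<noteq> line_of p" and p: "p \<in> vecs m" "j \<le> m" "p j \<noteq> 0"
  shows "proj m j p ` x \<in> pg_points (m - 1)"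
proof -
  obtain v where v: "v \<in> vecs m" "v \<noteq> (\<lambda>_. 0)" "x = line_of v"
    using x(1) by (auto simp: pg_points_iff)
  have "proj m j p v \<noteq> (\<lambda>_. 0)" using proj_nonzero[OF v(1,2) _ p] x(2) v(3) by blast
  then show ?thesis
    unfolding v(3) proj_image_line_of pg_points_iff using proj_vecs by blast
qed

lemma proj_same_point:
  fixes p v w :: "nat \<Rightarrow> 'a::field"
  assumes v: "v \<in> vecs m" and w: "w \<in> vecs m" "w \<noteq> (\<lambda>_. 0)"
    and p: "p \<in> vecs m" "j \<le> m" "p j \<noteq> 0"
    and same: "proj m j p ` line_of w = proj m j p ` line_of v"
  shows "line_of w = line_of v \<or> (\<exists>a b. p = (\<lambda>i. a * v i + b * w i))"
proof -
  obtain k where k: "proj m j p w = (\<lambda>i. k * proj m j p v i)"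
    using same line_of_eq_imp_multiple unfolding proj_image_line_of by blast
  have "proj m j p (\<lambda>i. w i - k * v i) = (\<lambda>_. 0)"
    unfolding proj_diff k by simp
  moreover have "(\<lambda>i. w i - k * v i) \<in> vecs m" using v w(1) by (simp add: vecs_def)
  ultimately have "(\<lambda>i. w i - k * v i) = (\<lambda>i. ((w j - k * v j) / p j) * p i)"
    using proj_eq_zero p by blast
  then obtain r where r: "\<And>i. w i - k * v i = r * p i" by (metis fun_cong)
  show ?thesis
  proof (cases "r = 0")
    case True
    then have w_eq: "w = (\<lambda>i. k * v i)" using r by (auto simp: fun_eq_iff)
    then have "k \<noteq> 0" using w(2) by auto
    then have "line_of w = line_of v" unfolding w_eq by (rule line_of_smult)
    then show ?thesis ..
  next
    case False
    then have "p = (\<lambda>i. (- k / r) * v i + (1 / r) * w i)"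
      using r by (simp add: fun_eq_iff field_simps)
    then show ?thesis by blast
  qed
qed

lemma proj_pullback_form:
  fixes a :: "nat \<Rightarrow> 'a::field"
  assumes m: "m \<ge> 1" and j: "j \<le> m" and pj: "p j \<noteq> 0" and a: "a \<in> vecs (m - 1)" "a \<noteq> (\<lambda>_. 0)"
  obtains a' where "a' \<in> vecs m" "a' \<noteq> (\<lambda>_. 0)"
    "\<And>v. (\<Sum>i\<le>m-1. a i * proj m j p v i) = (\<Sum>k\<le>m. a' k * v k)"
proof
  define S where "S = (\<Sum>i<m. a i * p (skip j i))"
  define a' where "a' k = (if k = j then - S / p j else if k \<le> m then a (if k < j then k else k - 1) else 0)" for k
  have a'_skip: "a' (skip j i) = a i" if "i < m" for i
    using that j by (auto simp: a'_def skip_def)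
  show "a' \<in> vecs m" using j by (auto simp: a'_def vecs_def)
  show "a' \<noteq> (\<lambda>_. 0)"
  proof
    assume zero: "a' = (\<lambda>_. 0)"
    from a(2) obtain i where i: "a i \<noteq> 0" by auto
    with a(1) have "i < m" using m by (cases "i < m") (auto simp: vecs_def)
    with zero a'_skip[OF this] i show False by simp
  qed
  fix v :: "nat \<Rightarrow> 'a"
  have "{..m-1} = {..<m}" using m by auto
  then have "(\<Sum>i\<le>m-1. a i * proj m j p v i) = (\<Sum>i<m. a i * (v (skip j i) - v j / p j * p (skip j i)))"
    by (intro sum.cong) (auto simp: proj_def)
  also have "\<dots> = (\<Sum>i<m. a' (skip j i) * v (skip j i)) - v j / p j * S"
    by (simp add: S_def a'_skip algebra_simps sum_subtractf sum_distrib_left)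
  also have "(\<Sum>i<m. a' (skip j i) * v (skip j i)) = (\<Sum>k\<in>{..m} - {j}. a' k * v k)"
    unfolding skip_image[OF j, symmetric]
    by (rule sum.reindex[symmetric, unfolded comp_def]) (rule inj_on_subset[OF inj_skip], simp)
  also have "\<dots> - v j / p j * S = (\<Sum>k\<le>m. a' k * v k)"
    using j by (simp add: sum.remove a'_def)
  finally show "(\<Sum>i\<le>m-1. a i * proj m j p v i) = (\<Sum>k\<le>m. a' k * v k)" .
qed

lemma proj_preimage_pg_hyperplane:
  assumes m: "m \<ge> 1" and p: "p \<in> vecs m" "j \<le> m" "p j \<noteq> 0"
    and a: "a \<in> vecs (m - 1)" "a \<noteq> (\<lambda>_. 0)"
  obtains a' where "a' \<in> vecs m" "a' \<noteq> (\<lambda>_. 0)"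
    "{x \<in> pg_points m - {line_of p}. proj m j p ` x \<in> pg_hyperplane (m - 1) a}
       = pg_hyperplane m a' - {line_of p}"
proof -
  obtain a' where a': "a' \<in> vecs m" "a' \<noteq> (\<lambda>_. 0)"
    and form: "\<And>v. (\<Sum>i\<le>m-1. a i * proj m j p v i) = (\<Sum>k\<le>m. a' k * v k)"
    using proj_pullback_form[of m j p a] m p(2,3) a by blast
  have "proj m j p ` x \<in> pg_hyperplane (m - 1) a \<longleftrightarrow> x \<in> pg_hyperplane m a'"
    if x: "x \<in> pg_points m" "x \<noteq> line_of p" for x
  proof -
    obtain v where v: "v \<in> vecs m" "v \<noteq> (\<lambda>_. 0)" "x = line_of v"
      using x(1) by (auto simp: pg_points_iff)
    have pv: "proj m j p v \<noteq> (\<lambda>_. 0)" using proj_nonzero[OF v(1,2) _ p] x(2) v(3) by blast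
    show ?thesis
      unfolding v(3) proj_image_line_of line_of_in_pg_hyperplane[OF proj_vecs pv]
        line_of_in_pg_hyperplane[OF v(1,2)] form ..
  qed
  then have "{x \<in> pg_points m - {line_of p}. proj m j p ` x \<in> pg_hyperplane (m - 1) a}
       = pg_hyperplane m a' - {line_of p}"
    using pg_hyperplane_subset[of m a'] by blast
  then show ?thesis using a' that by blast
qed

definition pushforward ::
  "nat \<Rightarrow> nat \<Rightarrow> (nat \<Rightarrow> 'a::field) \<Rightarrow> ((nat \<Rightarrow> 'a) set \<Rightarrow> 'b::comm_monoid_add) \<Rightarrow> (nat \<Rightarrow> 'a) set \<Rightarrow> 'b"
  where "pushforward m j p c Q = (\<Sum>x\<in>{x \<in> pg_points m. x \<noteq> line_of p \<and> proj m j p ` x = Q}. c x)"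

lemma pushforward_dual:
  fixes c :: "(nat \<Rightarrow> 'a::{finite,field}) set \<Rightarrow> 'b::field"
  assumes c: "c \<in> pg_dual_code m" "c (line_of p) = 0"
    and m: "m \<ge> 1" and p: "p \<in> vecs m" "j \<le> m" "p j \<noteq> 0"
  shows "pushforward m j p c \<in> pg_dual_code (m - 1)"
  unfolding pg_dual_code_iff
proof (intro conjI allI impI)
  fix Q :: "(nat \<Rightarrow> 'a) set" assume "Q \<notin> pg_points (m - 1)"
  then have "{x \<in> pg_points m. x \<noteq> line_of p \<and> proj m j p ` x = Q} = {}"
    using proj_pg_point[OF _ _ p] by blast
  then show "pushforward m j p c Q = 0" unfolding pushforward_def by (metis sum.empty)
next
  fix a :: "nat \<Rightarrow> 'a" assume a: "a \<in> vecs (m - 1) \<and> a \<noteq> (\<lambda>_. 0)"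
  define T where "T x = proj m j p ` x" for x
  define X where "X = {x \<in> pg_points m - {line_of p}. T x \<in> pg_hyperplane (m - 1) a}"
  obtain a' where a': "a' \<in> vecs m" "a' \<noteq> (\<lambda>_. 0)" and X: "X = pg_hyperplane m a' - {line_of p}"
    using proj_preimage_pg_hyperplane[OF m p, of a] a unfolding X_def T_def by blast
  have "(\<Sum>Q\<in>pg_hyperplane (m - 1) a. pushforward m j p c Q)
      = (\<Sum>Q\<in>pg_hyperplane (m - 1) a. \<Sum>x\<in>{x \<in> X. T x = Q}. c x)"
    unfolding pushforward_def T_def X_def by (intro sum.cong refl arg_cong[where f = "sum c"]) auto
  also have "\<dots> = (\<Sum>x\<in>X. c x)"
    by (rule sum.group) (auto simp: X_def finite_pg_hyperplane intro: finite_subset[OF _ finite_pg_points])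
  also have "\<dots> = (\<Sum>x\<in>pg_hyperplane m a'. c x)"
    unfolding X using c(2) by (simp add: sum_diff1 finite_pg_hyperplane)
  also have "\<dots> = 0" using c(1) a' by (simp add: pg_dual_code_iff)
  finally show "(\<Sum>Q\<in>pg_hyperplane (m - 1) a. pushforward m j p c Q) = 0" .
qed

(* The support of the pushforward is contained in the image of the support. *)
lemma pushforward_weight:
  fixes c :: "(nat \<Rightarrow> 'a::{finite,field}) set \<Rightarrow> 'b::field"
  shows "weight (pg_points (m - 1)) (pushforward m j p c) \<le> weight (pg_points m) c"
proof -
  let ?S = "{x \<in> pg_points m. c x \<noteq> 0}"
  have "{Q \<in> pg_points (m - 1). pushforward m j p c Q \<noteq> 0} \<subseteq> (\<lambda>x. proj m j p ` x) ` ?S"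
  proof
    fix Q assume "Q \<in> {Q \<in> pg_points (m - 1). pushforward m j p c Q \<noteq> 0}"
    then obtain x where "x \<in> {x \<in> pg_points m. x \<noteq> line_of p \<and> proj m j p ` x = Q}" "c x \<noteq> 0"
      unfolding pushforward_def using sum.not_neutral_contains_not_neutral by force
    then show "Q \<in> (\<lambda>x. proj m j p ` x) ` ?S" by auto
  qed
  then have "weight (pg_points (m - 1)) (pushforward m j p c) \<le> card ((\<lambda>x. proj m j p ` x) ` ?S)"
    unfolding weight_def by (intro card_mono) (simp_all add: finite_pg_points)
  also have "\<dots> \<le> card ?S" by (intro card_image_le) (simp add: finite_pg_points)
  finally show ?thesis by (simp add: weight_def)
qed

lemma pushforward_isolated_point:
  assumes x0: "x0 \<in> pg_points m" "x0 \<noteq> line_of p"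
    and alone: "\<And>x. x \<in> pg_points m \<Longrightarrow> x \<noteq> x0 \<Longrightarrow> x \<noteq> line_of p \<Longrightarrow>
                   proj m j p ` x = proj m j p ` x0 \<Longrightarrow> c x = 0"
  shows "pushforward m j p c (proj m j p ` (x0 :: (nat \<Rightarrow> 'a::{finite,field}) set)) = c x0"
proof -
  let ?F = "{x \<in> pg_points m. x \<noteq> line_of p \<and> proj m j p ` x = proj m j p ` x0}"
  have "pushforward m j p c (proj m j p ` x0) = c x0 + (\<Sum>x\<in>?F - {x0}. c x)"
    unfolding pushforward_def using x0 by (subst sum.remove[of _ x0]) (simp_all add: finite_pg_points)
  also have "(\<Sum>x\<in>?F - {x0}. c x) = 0" using alone by (intro sum.neutral) blast
  finally show ?thesis by simp
qed

(* Counting inputs for the choice of a centre: q >= 2, |GF(q)^(m+1)| >= q^4 for m >= 3, and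
   q + q^2 (2q - 1) < q^4 - 1. *)
lemma card_field_ge2: "card (UNIV :: 'a::{finite,field} set) \<ge> 2"
proof -
  have "card {0::'a, 1} \<le> card (UNIV::'a set)" by (rule card_mono) auto
  then show ?thesis by simp
qed

lemma card_vecs_ge:
  assumes "m \<ge> 3"
  shows "card (vecs m :: (nat \<Rightarrow> 'a::{finite,field}) set) \<ge> card (UNIV::'a set) ^ 4"
proof -
  define h :: "'a \<times> 'a \<times> 'a \<times> 'a \<Rightarrow> nat \<Rightarrow> 'a" where
    "h = (\<lambda>(a, b, c, d) i. if i = 0 then a else if i = 1 then b else if i = 2 then c else if i = 3 then d else 0)"
  have "inj h"
  proof (rule injI)
    fix x y assume e: "h x = h y"
    obtain a b c d a' b' c' d' where "x = (a, b, c, d)" "y = (a', b', c', d')"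
      by (metis prod.exhaust)
    with fun_cong[OF e, of 0] fun_cong[OF e, of 1] fun_cong[OF e, of 2] fun_cong[OF e, of 3]
    show "x = y" by (simp add: h_def)
  qed
  then have "card (UNIV::'a set) ^ 4 = card (range h)"
    by (simp add: card_image UNIV_Times_UNIV[symmetric] card_cartesian_product power4_eq_xxxx
        del: UNIV_Times_UNIV)
  also have "\<dots> \<le> card (vecs m :: (nat \<Rightarrow> 'a) set)"
    using assms by (intro card_mono finite_vecs) (auto simp: h_def vecs_def)
  finally show ?thesis .
qed

lemma centre_count_bound: "(q::nat) \<ge> 2 \<Longrightarrow> q + q * (q * (2 * q - 1)) < q ^ 4 - 1"
proof -
  assume "q \<ge> 2"
  then obtain r where "q = r + 2" by (metis add.commute le_Suc_ex)
  then show ?thesis by (simp add: algebra_simps power4_eq_xxxx)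
qed

(* For a set S of at most 2q points of PG(m,q), m >= 3, and a point line_of u in S, some point
   lies on no line joining line_of u with a point of S (and is not in S itself): these lines
   contain at most q + q^2 (2q - 1) < q^4 - 1 nonzero vectors. *)
lemma exists_projection_center:
  fixes S :: "(nat \<Rightarrow> 'a::{finite,field}) set set"
  assumes m: "m \<ge> 3" and S: "S \<subseteq> pg_points m" "card S \<le> 2 * card (UNIV::'a set)"
    and u: "line_of u \<in> S"
  shows "\<exists>p. p \<in> vecs m \<and> p \<noteq> (\<lambda>_. 0) \<and> (\<forall>y\<in>S. \<forall>w\<in>y. \<forall>a b. p \<noteq> (\<lambda>i. a * u i + b * w i))"
proof -
  let ?q = "card (UNIV::'a set)"
  have finS: "finite S" using finite_subset[OF S(1) finite_pg_points] .
  have "\<forall>y\<in>S. \<exists>v. y = line_of v" using S(1) by (auto simp: pg_points_def)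
  then obtain rep where rep: "\<And>y. y \<in> S \<Longrightarrow> y = line_of (rep y)" by metis
  define Bad where "Bad = range (\<lambda>a. (\<lambda>i. a * u i))
      \<union> (\<lambda>(a, b, y). (\<lambda>i. a * u i + b * rep y i)) ` (UNIV \<times> UNIV \<times> (S - {line_of u}))"
  have "card Bad \<le> ?q + card (UNIV \<times> UNIV \<times> (S - {line_of u}) :: ('a \<times> 'a \<times> _) set)"
    unfolding Bad_def using finS by (intro card_Un_le[THEN order_trans] add_mono card_image_le) auto
  also have "\<dots> = ?q + ?q * (?q * (card S - 1))"
    using u finS by (simp add: card_cartesian_product)
  also have "\<dots> \<le> ?q + ?q * (?q * (2 * ?q - 1))"
    using S(2) by (intro add_mono mult_le_mono order.refl) auto
  also have "\<dots> < ?q ^ 4 - 1" using card_field_ge2[where 'a = 'a] by (rule centre_count_bound)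
  also have "\<dots> \<le> card (vecs m - {(\<lambda>_. 0)} :: (nat \<Rightarrow> 'a) set)"
    using card_vecs_ge[OF m, where 'a = 'a] finite_vecs by (simp add: card_Diff_singleton vecs_def)
  finally have "card Bad < card (vecs m - {(\<lambda>_. 0)} :: (nat \<Rightarrow> 'a) set)" .
  moreover have "finite Bad" unfolding Bad_def using finS by simp
  ultimately have "\<not> vecs m - {(\<lambda>_. 0)} \<subseteq> Bad" by (meson card_mono not_le)
  then obtain p where p: "p \<in> vecs m" "p \<noteq> (\<lambda>_. 0)" "p \<notin> Bad" by blast
  have "p \<noteq> (\<lambda>i. a * u i + b * w i)" if y: "y \<in> S" "w \<in> y" for y w a b
  proof (cases "y = line_of u")
    case True
    then obtain k where "w = (\<lambda>i. k * u i)" using y(2) by (auto simp: in_line_of)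
    then have "(\<lambda>i. a * u i + b * w i) = (\<lambda>i. (a + b * k) * u i)" by (simp add: algebra_simps)
    then show ?thesis using p(3) by (auto simp: Bad_def)
  next
    case False
    obtain k where "w = (\<lambda>i. k * rep y i)" using y rep[OF y(1)] by (metis in_line_of)
    then have "(\<lambda>i. a * u i + b * w i) = (\<lambda>i. a * u i + (b * k) * rep y i)" by (simp add: mult.assoc)
    moreover have "(\<lambda>i. a * u i + (b * k) * rep y i) \<in> Bad"
      unfolding Bad_def using y(1) False by (intro UnI2 image_eqI[of _ _ "(a, b * k, y)"]) auto
    ultimately show ?thesis using p(3) by auto
  qed
  then show ?thesis using p(1,2) by blast
qed

lemma dual_codeword_projection:
  fixes c :: "(nat \<Rightarrow> 'a::{finite,field}) set \<Rightarrow> 'b::field"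
  assumes c: "c \<in> pg_dual_code m" "c \<noteq> (\<lambda>_. 0)" and m: "m \<ge> 3"
    and w: "weight (pg_points m) c \<le> 2 * card (UNIV::'a set)"
  obtains c' :: "(nat \<Rightarrow> 'a) set \<Rightarrow> 'b" where "c' \<in> pg_dual_code (m - 1)" "c' \<noteq> (\<lambda>_. 0)"
    "weight (pg_points (m - 1)) c' \<le> weight (pg_points m) c"
proof -
  define S where "S = {x \<in> pg_points m. c x \<noteq> 0}"
  have supp: "\<And>x. x \<notin> pg_points m \<Longrightarrow> c x = 0" using c(1) by (simp add: pg_dual_code_iff)
  obtain x0 where "c x0 \<noteq> 0" using c(2) by auto
  then have x0: "x0 \<in> S" using supp by (auto simp: S_def)
  then obtain u where u: "u \<in> vecs m" "u \<noteq> (\<lambda>_. 0)" "x0 = line_of u"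
    by (auto simp: S_def pg_points_iff)
  have S: "S \<subseteq> pg_points m" "card S \<le> 2 * card (UNIV::'a set)" "line_of u \<in> S"
    using w x0 u(3) by (auto simp: S_def weight_def)
  obtain p where p: "p \<in> vecs m" "p \<noteq> (\<lambda>_. 0)"
    and avoid: "\<forall>y\<in>S. \<forall>w\<in>y. \<forall>a b. p \<noteq> (\<lambda>i. a * u i + b * w i)"
    using exists_projection_center[OF m S] by blast
  obtain j where j: "p j \<noteq> 0" using p(2) by auto
  then have jm: "j \<le> m" using p(1) by (cases "j \<le> m") (auto simp: vecs_def)
  have "line_of p \<notin> S"
  proof
    assume "line_of p \<in> S"
    with avoid self_in_line_of[of p] have "p \<noteq> (\<lambda>i. 0 * u i + 1 * p i)" by blast
    then show False by simp
  qed
  then have cp: "c (line_of p) = 0" and x0p: "x0 \<noteq> line_of p"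
    using supp x0 by (auto simp: S_def)
  have alone: "c x = 0" if x: "x \<in> pg_points m" "x \<noteq> x0" "x \<noteq> line_of p"
    and same: "proj m j p ` x = proj m j p ` x0" for x
  proof (rule ccontr)
    assume "c x \<noteq> 0"
    then have xS: "x \<in> S" using x(1) by (simp add: S_def)
    obtain v where v: "v \<in> vecs m" "v \<noteq> (\<lambda>_. 0)" "x = line_of v"
      using x(1) by (auto simp: pg_points_iff)
    have "line_of v = line_of u \<or> (\<exists>a b. p = (\<lambda>i. a * u i + b * v i))"
      using proj_same_point[OF u(1) v(1,2) p(1) jm j] same unfolding v(3) u(3) .
    moreover have "line_of v \<noteq> line_of u" using x(2) v(3) u(3) by simp
    moreover have "p \<noteq> (\<lambda>i. a * u i + b * v i)" for a b
      using avoid xS self_in_line_of[of v] v(3) by blast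
    ultimately show False by blast
  qed
  define c' where "c' = pushforward m j p c"
  have "c' \<in> pg_dual_code (m - 1)"
    unfolding c'_def using pushforward_dual[OF c(1) cp _ p(1) jm j] m by simp
  moreover have "c' \<noteq> (\<lambda>_. 0)"
  proof -
    have "c' (proj m j p ` x0) = c x0"
      unfolding c'_def using x0 by (intro pushforward_isolated_point[OF _ x0p alone]) (simp_all add: S_def)
    then show ?thesis using \<open>c x0 \<noteq> 0\<close> by auto
  qed
  moreover have "weight (pg_points (m - 1)) c' \<le> weight (pg_points m) c"
    unfolding c'_def by (rule pushforward_weight)
  ultimately show ?thesis using that by blast
qed

lemma dual_codeword_descent:
  fixes c :: "(nat \<Rightarrow> 'a::{finite,field}) set \<Rightarrow> 'b::field"
  assumes "m \<ge> 2" "c \<in> pg_dual_code m" "c \<noteq> (\<lambda>_. 0)"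
    and "weight (pg_points m) c \<le> 2 * card (UNIV::'a set)"
  obtains c' :: "(nat \<Rightarrow> 'a) set \<Rightarrow> 'b" where "c' \<in> pg_dual_code 2" "c' \<noteq> (\<lambda>_. 0)"
    "weight (pg_points 2) c' \<le> weight (pg_points m) c"
  using assms
proof (induction m arbitrary: c rule: less_induct)
  case (less m)
  show ?case
  proof (cases "m = 2")
    case True
    then show ?thesis using less.prems by blast
  next
    case False
    then have m: "m \<ge> 3" using less.prems(2) by simp
    obtain c' :: "(nat \<Rightarrow> 'a) set \<Rightarrow> 'b" where c': "c' \<in> pg_dual_code (m - 1)" "c' \<noteq> (\<lambda>_. 0)"
      "weight (pg_points (m - 1)) c' \<le> weight (pg_points m) c"
      using dual_codeword_projection[OF less.prems(3,4) m less.prems(5)] by blast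
    show ?thesis
    proof (rule less.IH[of "m - 1" c'])
      fix c'' :: "(nat \<Rightarrow> 'a) set \<Rightarrow> 'b"
      assume "c'' \<in> pg_dual_code 2" "c'' \<noteq> (\<lambda>_. 0)" "weight (pg_points 2) c'' \<le> weight (pg_points (m - 1)) c'"
      then show thesis using less.prems(1) c'(3) by simp
    qed (use m c' less.prems(5) in auto)
  qed
qed

lemma dual_weights_finite:
  "finite {weight (pg_points m) c | c. c \<in> (pg_dual_code m :: ((nat \<Rightarrow> 'a::{finite,field}) set \<Rightarrow> 'b::field) set) \<and> c \<noteq> (\<lambda>_. 0)}"
proof (rule finite_subset)
  show "{weight (pg_points m) c | c. c \<in> (pg_dual_code m :: ((nat \<Rightarrow> 'a) set \<Rightarrow> 'b) set) \<and> c \<noteq> (\<lambda>_. 0)}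
      \<subseteq> {..card (pg_points m :: (nat \<Rightarrow> 'a) set set)}"
    unfolding weight_def by (auto intro!: card_mono finite_pg_points)
qed simp

lemma dual_min_dist_le:
  fixes c :: "(nat \<Rightarrow> 'a::{finite,field}) set \<Rightarrow> 'b::field"
  assumes "c \<in> pg_dual_code m" "c \<noteq> (\<lambda>_. 0)"
  shows "dual_min_dist TYPE('a) TYPE('b) m \<le> weight (pg_points m) c"
  unfolding dual_min_dist_def using assms dual_weights_finite by (intro Min_le) auto

lemma dual_min_dist_attained:
  fixes c :: "(nat \<Rightarrow> 'a::{finite,field}) set \<Rightarrow> 'b::field"
  assumes "c \<in> pg_dual_code m" "c \<noteq> (\<lambda>_. 0)"
  obtains c' :: "(nat \<Rightarrow> 'a) set \<Rightarrow> 'b" where "c' \<in> pg_dual_code m" "c' \<noteq> (\<lambda>_. 0)"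
    "weight (pg_points m) c' = dual_min_dist TYPE('a) TYPE('b) m"
proof -
  have "dual_min_dist TYPE('a) TYPE('b) m
      \<in> {weight (pg_points m) c | c. c \<in> (pg_dual_code m :: ((nat \<Rightarrow> 'a) set \<Rightarrow> 'b) set) \<and> c \<noteq> (\<lambda>_. 0)}"
    unfolding dual_min_dist_def using assms dual_weights_finite by (intro Min_in) auto
  then show ?thesis using that by auto
qed

theorem mainTheorem14:
  fixes n :: nat
  assumes "n \<ge> 3"
    and "card (UNIV :: 'b::{finite,field} set) = semiring_char TYPE('a::{finite,field})"
  shows "dual_min_dist TYPE('a) TYPE('b) n = dual_min_dist TYPE('a) TYPE('b) 2"
proof -
  let ?d = "dual_min_dist TYPE('a) TYPE('b)"
  have q: "(of_nat (card (UNIV::'a set)) :: 'b) = 0"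
    using card_field_eq_0_in_char[OF assms(2)] .
  obtain c0 :: "(nat \<Rightarrow> 'a) set \<Rightarrow> 'b" where c0: "c0 \<in> pg_dual_code 2" "c0 \<noteq> (\<lambda>_. 0)"
    "weight (pg_points 2) c0 \<le> 2 * card (UNIV::'a set)"
    using plane_small_codeword[OF q] by blast
  obtain c2 :: "(nat \<Rightarrow> 'a) set \<Rightarrow> 'b" where c2: "c2 \<in> pg_dual_code 2" "c2 \<noteq> (\<lambda>_. 0)"
    "weight (pg_points 2) c2 = ?d 2"
    using dual_min_dist_attained[OF c0(1,2)] by blast
  have "c2 \<in> pg_dual_code n" "weight (pg_points n) c2 = ?d 2"
    using pg_dual_code_embed[OF c2(1) _ _ q, of n] assms(1) c2(3) by simp_all
  then have le: "?d n \<le> ?d 2" using dual_min_dist_le c2(2) by metis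
  then obtain cn :: "(nat \<Rightarrow> 'a) set \<Rightarrow> 'b" where cn: "cn \<in> pg_dual_code n" "cn \<noteq> (\<lambda>_. 0)"
    "weight (pg_points n) cn = ?d n"
    using dual_min_dist_attained \<open>c2 \<in> pg_dual_code n\<close> c2(2) by metis
  have "weight (pg_points n) cn \<le> 2 * card (UNIV::'a set)"
    using cn(3) le dual_min_dist_le[OF c0(1,2)] c0(3) by linarith
  then obtain c' :: "(nat \<Rightarrow> 'a) set \<Rightarrow> 'b" where "c' \<in> pg_dual_code 2" "c' \<noteq> (\<lambda>_. 0)"
    "weight (pg_points 2) c' \<le> ?d n"
    using dual_codeword_descent[OF _ cn(1,2)] assms(1) cn(3) by auto
  then have "?d 2 \<le> ?d n" using dual_min_dist_le order_trans by blast
  with le show ?thesis by simp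
qed

end
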